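(* Let $\alpha_1,\ldots,\alpha_t\in\mathbb{T}$ and $\varepsilon>0$. Then: (1) there exists a positive integer $M$ such that for every $\beta\in\mathbb{T}$, if $\|\beta H_\varepsilon(\alpha_1,\ldots,\alpha_t)\|\le 1/6$ then $\beta\in\langle\alpha_1,\ldots,\alpha_t\rangle_M$; (2) for such an $M$ and every open set $V\subseteq\mathbb{T}$ with $V\supseteq\langle\alpha_1,\ldots,\alpha_t\rangle_M$, there exists a positive integer $N$ such that for every $\beta\in\mathbb{T}$, if $\|\beta H_{N,\varepsilon}(\alpha_1,\ldots,\alpha_t)\|\le 1/6$ then $\beta\in V$.
   Context: $\mathbb{T}=\mathbb{R}/\mathbb{Z}$; $\|x\|$ is the distance from $x$ to the nearest integer. Bohr sets: $H_\varepsilon(\alpha_1,\ldots,\alpha_t)=\{n\in\mathbb{N}: \|n\alpha_1\|,\ldots,\|n\alpha_t\|\le\varepsilon\}$ and $H_{N,\varepsilon}(\alpha_1,\ldots,\alpha_t)=\{n\in\mathbb{N}, n\le N: \|n\alpha_1\|,\ldots,\|n\alpha_t\|\le\varepsilon\}$. For $M\in\mathbb{N}$, $\langle\alpha_1,\ldots,\alpha_t\rangle_M=\{k_1\alpha_1+\cdots+k_t\alpha_t: k_i\in\mathbb{Z},\ |k_1|,\ldots,|k_t|\le M\}$. For $\beta\in\mathbb{T}$ and $S\subseteq\mathbb{N}$, $\|\beta S\|=\sup\{\|n\beta\|: n\in S\}$. *)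

theory Defs
  imports Complex_Main
begin

text \<open>The circle T = R/Z is modelled by real representatives; subsets of T are modelled
  by their (1-periodic) preimages in R.\<close>

definition normT :: "real \<Rightarrow> real" where
  "normT x = \<bar>x - of_int (round x)\<bar>"

definition bohr :: "nat \<Rightarrow> (nat \<Rightarrow> real) \<Rightarrow> real \<Rightarrow> nat set" where
  "bohr t \<alpha> \<epsilon> = {n. n \<ge> 1 \<and> (\<forall>i<t. normT (real n * \<alpha> i) \<le> \<epsilon>)}"

definition bohrN :: "nat \<Rightarrow> (nat \<Rightarrow> real) \<Rightarrow> nat \<Rightarrow> real \<Rightarrow> nat set" where
  "bohrN t \<alpha> N \<epsilon> = {n \<in> bohr t \<alpha> \<epsilon>. n \<le> N}"

text \<open>Preimage in R of <alpha_1..alpha_t>_M \<subseteq> T.\<close>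
definition genM :: "nat \<Rightarrow> (nat \<Rightarrow> real) \<Rightarrow> nat \<Rightarrow> real set" where
  "genM t \<alpha> M = {x. \<exists>k :: nat \<Rightarrow> int. (\<forall>i<t. \<bar>k i\<bar> \<le> int M) \<and>
                       x - (\<Sum>i<t. of_int (k i) * \<alpha> i) \<in> \<int>}"

text \<open>||beta S|| <= c, i.e. sup{||n beta|| : n in S} <= c (with sup of empty set = 0).\<close>
definition normS_le :: "real \<Rightarrow> nat set \<Rightarrow> real \<Rightarrow> bool" where
  "normS_le \<beta> S c \<longleftrightarrow> (\<forall>n\<in>S. normT (real n * \<beta>) \<le> c)"

text \<open>Open subsets of T = open 1-periodic subsets of R.\<close>
definition openT :: "real set \<Rightarrow> bool" where
  "openT V \<longleftrightarrow> open V \<and> (\<forall>x. x \<in> V \<longleftrightarrow> x + 1 \<in> V)"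

end

theory Submission
  imports Defs "HOL-Analysis.Analysis"
begin

text \<open>
  The weight \<open>\<Phi>(n) = \<Prod>i<t. ((1 + cos (2\<pi> n \<alpha>i)) / 2)^m\<close> is a trigonometric
  polynomial in \<open>n\<close> whose frequencies lie in \<open>\<langle>\<alpha>\<rangle>_m\<close>. If \<open>\<beta>\<close> is not one of them modulo 1,
  the correlations \<open>\<Sum>n<N. \<Phi>(n) e(-n\<beta>)\<close> stay bounded, being combinations of geometric sums
  with ratio \<open>\<noteq> 1\<close>. If \<open>\<parallel>\<beta> H_\<epsilon>\<parallel> \<le> 1/6\<close>, on the other hand, \<open>\<Phi>(n) cos (2\<pi> n \<beta>) \<ge> \<Phi>(n)/2\<close> on
  \<open>H_\<epsilon>\<close>, while off \<open>H_\<epsilon>\<close> the weight is exponentially small in \<open>m\<close> compared with its size on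
  \<open>H_(1/K)\<close>. Since by Dirichlet's pigeonhole argument about \<open>N/K^t\<close> of the \<open>n < N\<close> lie in
  \<open>H_(1/K)\<close>, the real parts of the correlations grow linearly in \<open>N\<close> once \<open>m\<close> is large.

  Part (2) is compactness: \<open>\<parallel>\<beta> S\<parallel> \<le> 1/6\<close> is a closed condition on \<open>\<beta>\<close>, so counterexamples
  for \<open>H_(N,\<epsilon>)\<close>, \<open>N \<rightarrow> \<infinity>\<close>, accumulate at a point that satisfies it for all of \<open>H_\<epsilon>\<close> and hence
  lies in the open set \<open>V \<supseteq> \<langle>\<alpha>\<rangle>_M\<close>, which must then contain some of the counterexamples.
\<close>

lemma normT_nonneg: "0 \<le> normT x"
  by (simp add: normT_def)

lemma normT_le_half: "normT x \<le> 1/2"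
  unfolding normT_def round_def by linarith

lemma normT_le_dist_int: "normT x \<le> \<bar>x - of_int k\<bar>"
  unfolding normT_def by (rule round_diff_minimal)

lemma normT_add_int: "normT (x + of_int k) = normT x"
proof -
  have "round (x + of_int k) = round x + k"
    unfolding round_def using floor_add_int[of "x + 1/2" k] by (simp add: algebra_simps)
  then show ?thesis by (simp add: normT_def)
qed

lemma cos_2pi_normT: "cos (2*pi*normT x) = cos (2*pi*x)"
proof -
  define w where "w = x - of_int (round x)"
  have "cos (2*pi*x) = cos (2*pi*w + of_int (round x) * (2*pi))"
    by (simp add: w_def algebra_simps)
  also have "\<dots> = cos (2*pi*w)"
    using cos.plus_of_int[of "2*pi*w" "round x"] by simp
  also have "\<dots> = cos \<bar>2*pi*w\<bar>"
    by (rule cos_abs_real[symmetric])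
  also have "\<bar>2*pi*w\<bar> = 2*pi*normT x"
    by (simp add: w_def normT_def abs_mult)
  finally show ?thesis ..
qed

lemma normT_le_iff_cos_ge:
  assumes "0 \<le> a" "a \<le> 1/2"
  shows "normT x \<le> a \<longleftrightarrow> cos (2*pi*a) \<le> cos (2*pi*x)"
proof -
  have "cos (2*pi*a) \<le> cos (2*pi*normT x) \<longleftrightarrow> 2*pi*normT x \<le> 2*pi*a"
    using assms normT_nonneg[of x] normT_le_half[of x] by (intro cos_mono_le_eq) auto
  then show ?thesis by (simp add: cos_2pi_normT)
qed

lemma normT_ge_iff_cos_le:
  assumes "0 \<le> a" "a \<le> 1/2"
  shows "a \<le> normT x \<longleftrightarrow> cos (2*pi*x) \<le> cos (2*pi*a)"
proof -
  have "cos (2*pi*normT x) \<le> cos (2*pi*a) \<longleftrightarrow> 2*pi*a \<le> 2*pi*normT x"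
    using assms normT_nonneg[of x] normT_le_half[of x] by (intro cos_mono_le_eq) auto
  then show ?thesis by (simp add: cos_2pi_normT)
qed

lemma normT_le_sixth_iff: "normT x \<le> 1/6 \<longleftrightarrow> 1/2 \<le> cos (2*pi*x)"
proof -
  have sixth: "cos (2*pi*(1/6)) = 1/2"
    using cos_60 by (simp add: field_simps)
  show ?thesis
    using normT_le_iff_cos_ge[of "1/6" x] unfolding sixth by simp
qed

definition raised_cos :: "real \<Rightarrow> real" where
  "raised_cos x = (1 + cos (2*pi*x)) / 2"

definition bohr_kernel :: "nat \<Rightarrow> (nat \<Rightarrow> real) \<Rightarrow> nat \<Rightarrow> nat \<Rightarrow> real" where
  "bohr_kernel t \<alpha> m n = (\<Prod>i<t. raised_cos (real n * \<alpha> i) ^ m)"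

definition int_combinations :: "nat \<Rightarrow> (nat \<Rightarrow> real) \<Rightarrow> nat \<Rightarrow> real set" where
  "int_combinations t \<alpha> M = {\<Sum>i<t. of_int (k i) * \<alpha> i | k. \<forall>i<t. \<bar>k i\<bar> \<le> int M}"

lemma genM_iff: "\<beta> \<in> genM t \<alpha> M \<longleftrightarrow> (\<exists>\<theta>\<in>int_combinations t \<alpha> M. \<beta> - \<theta> \<in> \<int>)"
  by (auto simp: genM_def int_combinations_def)

lemma int_combinations_Suc:
  assumes "\<theta> \<in> int_combinations t \<alpha> M" "\<bar>j\<bar> \<le> int M"
  shows "\<theta> + of_int j * \<alpha> t \<in> int_combinations (Suc t) \<alpha> M"
proof -
  obtain k where k: "\<forall>i<t. \<bar>k i\<bar> \<le> int M" "\<theta> = (\<Sum>i<t. of_int (k i) * \<alpha> i)"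
    using assms(1) by (auto simp: int_combinations_def)
  have "(\<Sum>i<t. of_int ((k(t := j)) i) * \<alpha> i) = \<theta>"
    unfolding k(2) by (intro sum.cong) auto
  then have "\<theta> + of_int j * \<alpha> t = (\<Sum>i<Suc t. of_int ((k(t := j)) i) * \<alpha> i)"
    by simp
  moreover have "\<forall>i<Suc t. \<bar>(k(t := j)) i\<bar> \<le> int M"
    using k(1) assms(2) by (auto simp: less_Suc_eq)
  ultimately show ?thesis
    unfolding int_combinations_def by blast
qed

definition trig_eval :: "(complex \<times> real) list \<Rightarrow> nat \<Rightarrow> complex" where
  "trig_eval L n = (\<Sum>p\<leftarrow>L. fst p * cis (2*pi*real n * snd p))"

definition trig_mult :: "(complex \<times> real) list \<Rightarrow> (complex \<times> real) list \<Rightarrow> (complex \<times> real) list" where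
  "trig_mult L1 L2 = [(fst p * fst q, snd p + snd q). p \<leftarrow> L1, q \<leftarrow> L2]"

lemma trig_eval_Nil [simp]: "trig_eval [] n = 0"
  by (simp add: trig_eval_def)

lemma trig_eval_Cons [simp]: "trig_eval (p # L) n = fst p * cis (2*pi*real n * snd p) + trig_eval L n"
  by (simp add: trig_eval_def)

lemma trig_eval_append [simp]: "trig_eval (L1 @ L2) n = trig_eval L1 n + trig_eval L2 n"
  by (simp add: trig_eval_def)

lemma trig_eval_scale_shift:
  "trig_eval (map (\<lambda>q. (c * fst q, a + snd q)) L) n = c * cis (2*pi*real n*a) * trig_eval L n"
proof (induction L)
  case (Cons q L)
  have "cis (2*pi*real n*(a + snd q)) = cis (2*pi*real n*a) * cis (2*pi*real n * snd q)"
    by (simp add: cis_mult algebra_simps)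
  with Cons show ?case by (simp add: algebra_simps)
qed simp

lemma trig_eval_mult: "trig_eval (trig_mult L1 L2) n = trig_eval L1 n * trig_eval L2 n"
  by (induction L1) (simp_all add: trig_mult_def trig_eval_scale_shift algebra_simps)

lemma snd_trig_mult:
  "p \<in> set (trig_mult L1 L2) \<Longrightarrow> \<exists>p1\<in>set L1. \<exists>p2\<in>set L2. snd p = snd p1 + snd p2"
  by (force simp: trig_mult_def)

lemma raised_cos_power_trig_poly:
  "\<exists>L. (\<forall>n. trig_eval L n = of_real (raised_cos (real n * a) ^ m)) \<and>
       (\<forall>p\<in>set L. \<exists>j. \<bar>j\<bar> \<le> int m \<and> snd p = of_int j * a)"
proof (induction m)
  case 0
  show ?case by (intro exI[of _ "[(1, 0)]"]) auto
next
  case (Suc m)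
  then obtain L where L: "\<forall>n. trig_eval L n = of_real (raised_cos (real n * a) ^ m)"
    "\<forall>p\<in>set L. \<exists>j. \<bar>j\<bar> \<le> int m \<and> snd p = of_int j * a" by blast
  define R where "R = [(1/2 :: complex, 0), (1/4, a), (1/4, -a)]"
  have R: "trig_eval R n = of_real (raised_cos (real n * a))" for n
    by (simp add: R_def raised_cos_def complex_eq_iff algebra_simps)
  have "trig_eval (trig_mult R L) n = of_real (raised_cos (real n * a) ^ Suc m)" for n
    by (simp add: trig_eval_mult R L(1))
  moreover have "\<exists>j. \<bar>j\<bar> \<le> int (Suc m) \<and> snd p = of_int j * a" if p_in: "p \<in> set (trig_mult R L)" for p
  proof -
    obtain p1 p2 where p: "p1 \<in> set R" "p2 \<in> set L" "snd p = snd p1 + snd p2"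
      using snd_trig_mult[OF p_in] by blast
    obtain j where j: "\<bar>j\<bar> \<le> int m" "snd p2 = of_int j * a"
      using L(2) p(2) by blast
    from p(1) consider "snd p1 = 0" | "snd p1 = of_int 1 * a" | "snd p1 = of_int (-1) * a"
      by (auto simp: R_def)
    then show ?thesis
    proof cases
      case 1 with j p(3) show ?thesis by (intro exI[of _ j]) auto
    next
      case 2 with j p(3) show ?thesis by (intro exI[of _ "j + 1"]) (auto simp: algebra_simps)
    next
      case 3 with j p(3) show ?thesis by (intro exI[of _ "j - 1"]) (auto simp: algebra_simps)
    qed
  qed
  ultimately show ?case by blast
qed

lemma bohr_kernel_trig_poly:
  "\<exists>L. (\<forall>n. trig_eval L n = of_real (bohr_kernel t \<alpha> m n)) \<and> snd ` set L \<subseteq> int_combinations t \<alpha> m"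
proof (induction t)
  case 0
  have "0 \<in> int_combinations 0 \<alpha> m"
    by (simp add: int_combinations_def)
  then show ?case
    by (intro exI[of _ "[(1, 0)]"]) (auto simp: bohr_kernel_def)
next
  case (Suc t)
  then obtain L where L: "\<forall>n. trig_eval L n = of_real (bohr_kernel t \<alpha> m n)"
    "snd ` set L \<subseteq> int_combinations t \<alpha> m" by blast
  obtain R where R: "\<forall>n. trig_eval R n = of_real (raised_cos (real n * \<alpha> t) ^ m)"
    "\<forall>p\<in>set R. \<exists>j. \<bar>j\<bar> \<le> int m \<and> snd p = of_int j * \<alpha> t"
    using raised_cos_power_trig_poly by blast
  have "trig_eval (trig_mult L R) n = of_real (bohr_kernel (Suc t) \<alpha> m n)" for n
    by (simp add: trig_eval_mult L(1) R(1) bohr_kernel_def)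
  moreover have "snd p \<in> int_combinations (Suc t) \<alpha> m" if p_in: "p \<in> set (trig_mult L R)" for p
  proof -
    obtain p1 p2 where p: "p1 \<in> set L" "p2 \<in> set R" "snd p = snd p1 + snd p2"
      using snd_trig_mult[OF p_in] by blast
    obtain j where "\<bar>j\<bar> \<le> int m" "snd p2 = of_int j * \<alpha> t"
      using R(2) p(2) by blast
    with p L(2) show ?thesis
      using int_combinations_Suc by fastforce
  qed
  ultimately show ?case by blast
qed

lemma cis_2pi_eq_1_imp_Ints:
  assumes "cis (2*pi*\<theta>) = 1"
  shows "\<theta> \<in> \<int>"
proof -
  have "cos (2*pi*\<theta>) = 1"
    using assms by (metis cis.sel(1) one_complex.sel(1))
  then obtain k where "2*pi*\<theta> = real_of_int k * 2 * pi"
    using cos_one_2pi_int by blast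
  then show ?thesis by simp
qed

lemma norm_sum_cis_le:
  assumes "\<theta> \<notin> \<int>"
  shows "cmod (\<Sum>n<N. cis (2*pi*real n*\<theta>)) \<le> 2 / cmod (1 - cis (2*pi*\<theta>))"
proof -
  define z where "z = cis (2*pi*\<theta>)"
  have "z \<noteq> 1"
    using assms cis_2pi_eq_1_imp_Ints unfolding z_def by blast
  have "(\<Sum>n<N. cis (2*pi*real n*\<theta>)) = (\<Sum>n<N. z ^ n)"
    by (intro sum.cong refl) (simp only: z_def Complex.DeMoivre, simp add: algebra_simps)
  also have "\<dots> = (1 - z ^ N) / (1 - z)"
    using \<open>z \<noteq> 1\<close> by (simp add: sum_gp_strict)
  finally have sum_eq: "(\<Sum>n<N. cis (2*pi*real n*\<theta>)) = (1 - z ^ N) / (1 - z)" .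
  have "cmod (1 - z ^ N) \<le> cmod 1 + cmod (z ^ N)"
    by (rule norm_triangle_ineq4)
  also have "\<dots> = 2"
    by (simp add: z_def norm_power)
  finally show ?thesis
    unfolding sum_eq z_def[symmetric] norm_divide by (simp add: divide_right_mono)
qed

lemma norm_trig_correlation_le:
  assumes "\<forall>p\<in>set L. snd p - \<beta> \<notin> \<int>"
  shows "cmod (\<Sum>n<N. trig_eval L n * cis (- (2*pi*real n*\<beta>))) \<le>
         (\<Sum>p\<leftarrow>L. cmod (fst p) * (2 / cmod (1 - cis (2*pi*(snd p - \<beta>)))))"
  using assms
proof (induction L)
  case (Cons p L)
  have "trig_eval (p # L) n * cis (- (2*pi*real n*\<beta>)) =
        fst p * cis (2*pi*real n*(snd p - \<beta>)) + trig_eval L n * cis (- (2*pi*real n*\<beta>))" for n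
    by (simp add: algebra_simps cis_mult)
  then have split: "(\<Sum>n<N. trig_eval (p # L) n * cis (- (2*pi*real n*\<beta>))) =
      fst p * (\<Sum>n<N. cis (2*pi*real n*(snd p - \<beta>))) + (\<Sum>n<N. trig_eval L n * cis (- (2*pi*real n*\<beta>)))"
    by (simp add: sum.distrib sum_distrib_left)
  have "cmod (fst p * (\<Sum>n<N. cis (2*pi*real n*(snd p - \<beta>)))) \<le>
        cmod (fst p) * (2 / cmod (1 - cis (2*pi*(snd p - \<beta>))))"
    unfolding norm_mult using Cons.prems by (intro mult_left_mono norm_sum_cis_le) auto
  with Cons show ?case
    unfolding split by (simp add: norm_triangle_le)
qed simp

lemma bohr_kernel_correlation_bounded:
  assumes "\<beta> \<notin> genM t \<alpha> m"
  shows "\<exists>C. \<forall>N. (\<Sum>n<N. bohr_kernel t \<alpha> m n * cos (2*pi*(real n * \<beta>))) \<le> C"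
proof -
  obtain L where L: "\<forall>n. trig_eval L n = of_real (bohr_kernel t \<alpha> m n)"
    "snd ` set L \<subseteq> int_combinations t \<alpha> m"
    using bohr_kernel_trig_poly by blast
  have off_frequencies: "\<forall>p\<in>set L. snd p - \<beta> \<notin> \<int>"
  proof (intro ballI notI)
    fix p assume "p \<in> set L" "snd p - \<beta> \<in> \<int>"
    then have "\<beta> - snd p \<in> \<int>" "snd p \<in> int_combinations t \<alpha> m"
      using L(2) Ints_minus[of "snd p - \<beta>"] by auto
    with assms show False
      unfolding genM_iff by blast
  qed
  have "(\<Sum>n<N. bohr_kernel t \<alpha> m n * cos (2*pi*(real n * \<beta>))) =
        Re (\<Sum>n<N. trig_eval L n * cis (- (2*pi*real n*\<beta>)))" for N
    by (simp add: L(1) Re_sum mult.assoc)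
  also have "\<dots> N \<le> cmod (\<Sum>n<N. trig_eval L n * cis (- (2*pi*real n*\<beta>)))" for N
    by (rule complex_Re_le_cmod)
  also have "\<dots> N \<le> (\<Sum>p\<leftarrow>L. cmod (fst p) * (2 / cmod (1 - cis (2*pi*(snd p - \<beta>)))))" for N
    by (rule norm_trig_correlation_le[OF off_frequencies])
  finally show ?thesis by blast
qed

lemma card_le_Suc_card_differences:
  fixes F B :: "nat set"
  assumes "F \<subseteq> {..<N}" and diff: "\<And>n n'. n \<in> F \<Longrightarrow> n' \<in> F \<Longrightarrow> n' < n \<Longrightarrow> n - n' \<in> B"
  shows "card F \<le> Suc (card {n \<in> B. n < N})"
proof (cases "F = {}")
  case False
  have "finite F"
    using assms(1) finite_subset by blast
  define n0 where "n0 = Min F"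
  have n0: "n0 \<in> F" "\<And>n. n \<in> F \<Longrightarrow> n0 \<le> n"
    using \<open>finite F\<close> False by (auto simp: n0_def)
  have "n - n0 \<in> {n \<in> B. n < N}" if "n \<in> F - {n0}" for n
  proof -
    have "n0 < n" "n < N"
      using n0(2)[of n] that assms(1) by auto
    then show ?thesis
      using diff[of n n0] that n0(1) by auto
  qed
  then have "(\<lambda>n. n - n0) ` (F - {n0}) \<subseteq> {n \<in> B. n < N}"
    by blast
  moreover have "inj_on (\<lambda>n. n - n0) (F - {n0})"
    using n0(2) by (intro inj_on_diff_nat) auto
  moreover have "finite {n \<in> B. n < N}"
    by (rule finite_subset[of _ "{..<N}"]) auto
  ultimately have "card (F - {n0}) \<le> card {n \<in> B. n < N}"
    by (intro card_inj_on_le)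
  then show ?thesis
    using n0(1) \<open>finite F\<close> by (simp add: card_Diff_singleton)
qed simp

lemma normT_diff_lt_if_same_floor:
  fixes K x y :: real
  assumes "K > 0" "\<lfloor>K * frac x\<rfloor> = \<lfloor>K * frac y\<rfloor>"
  shows "normT (x - y) < 1 / K"
proof -
  have "\<bar>K * frac x - K * frac y\<bar> < 1"
    using assms(2) by linarith
  then have "K * \<bar>frac x - frac y\<bar> < 1"
    using assms(1) by (simp add: abs_mult right_diff_distrib[symmetric])
  then have "\<bar>frac x - frac y\<bar> < 1 / K"
    using assms(1) by (simp add: field_simps)
  moreover have "x - y - of_int (\<lfloor>x\<rfloor> - \<lfloor>y\<rfloor>) = frac x - frac y"
    by (simp add: frac_def)
  ultimately show ?thesis
    using normT_le_dist_int[of "x - y" "\<lfloor>x\<rfloor> - \<lfloor>y\<rfloor>"] by simp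
qed

lemma card_bohr_lessThan_ge:
  assumes "K \<ge> 1"
  shows "real N / real K ^ t - 1 \<le> real (card {n \<in> bohr t \<alpha> (1 / real K). n < N})"
proof -
  define cell where "cell n = restrict (\<lambda>i. \<lfloor>real K * frac (real n * \<alpha> i)\<rfloor>) {..<t}" for n
  define S where "S = PiE {..<t} (\<lambda>_. {0..<int K})"
  have "finite S" "card S = K ^ t" "S \<noteq> {}"
    using assms by (auto simp: S_def card_PiE PiE_eq_empty_iff finite_PiE)
  have "\<lfloor>real K * frac x\<rfloor> \<in> {0..<int K}" for x
    using assms frac_lt_1[of x] by (auto simp: frac_ge_0 floor_less_iff)
  then have "cell \<in> {..<N} \<rightarrow> S"
    by (auto simp: cell_def S_def)
  then obtain c where "c \<in> S" and pigeon: "card {..<N} \<le> card (cell -` {c} \<inter> {..<N}) * card S"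
    using pigeonhole_card[of cell "{..<N}" S] \<open>finite S\<close> \<open>S \<noteq> {}\<close> by auto
  define F where "F = cell -` {c} \<inter> {..<N}"
  have "n - n' \<in> bohr t \<alpha> (1 / real K)" if "n \<in> F" "n' \<in> F" "n' < n" for n n'
  proof -
    have "normT (real (n - n') * \<alpha> i) \<le> 1 / real K" if "i < t" for i
    proof -
      have "cell n i = cell n' i"
        using \<open>n \<in> F\<close> \<open>n' \<in> F\<close> by (simp add: F_def)
      then have "normT (real n * \<alpha> i - real n' * \<alpha> i) < 1 / real K"
        using \<open>i < t\<close> assms by (intro normT_diff_lt_if_same_floor) (auto simp: cell_def)
      then show ?thesis
        using \<open>n' < n\<close> by (simp add: of_nat_diff left_diff_distrib)
    qed
    with \<open>n' < n\<close> show ?thesis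
      by (simp add: bohr_def)
  qed
  then have "card F \<le> Suc (card {n \<in> bohr t \<alpha> (1 / real K). n < N})"
    by (intro card_le_Suc_card_differences[of F N]) (auto simp: F_def)
  then have "card F * K ^ t \<le> Suc (card {n \<in> bohr t \<alpha> (1 / real K). n < N}) * K ^ t"
    by (rule mult_le_mono1)
  with pigeon have "N \<le> Suc (card {n \<in> bohr t \<alpha> (1 / real K). n < N}) * K ^ t"
    unfolding F_def \<open>card S = K ^ t\<close> card_lessThan by linarith
  then have "real N \<le> real (Suc (card {n \<in> bohr t \<alpha> (1 / real K). n < N}) * K ^ t)"
    by (simp only: of_nat_le_iff)
  then show ?thesis
    using assms by (simp add: field_simps)
qed

lemma raised_cos_nonneg: "0 \<le> raised_cos x"
proof -
  have "0 \<le> 1 + cos (2*pi*x)"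
    using cos_ge_minus_one[of "2*pi*x"] by linarith
  then show ?thesis
    by (simp add: raised_cos_def)
qed

lemma raised_cos_le_1: "raised_cos x \<le> 1"
  using cos_le_one[of "2*pi*x"] by (simp add: raised_cos_def)

lemma raised_cos_ge_if_normT_le:
  assumes "normT x \<le> a" "a \<le> 1/2"
  shows "raised_cos a \<le> raised_cos x"
  using assms normT_nonneg[of x] normT_le_iff_cos_ge[of a x] by (simp add: raised_cos_def)

lemma raised_cos_le_if_normT_ge:
  assumes "a \<le> normT x" "0 \<le> a" "a \<le> 1/2"
  shows "raised_cos x \<le> raised_cos a"
  using assms normT_ge_iff_cos_le[of a x] by (simp add: raised_cos_def)

lemma bohr_mono: "\<delta> \<le> \<epsilon> \<Longrightarrow> bohr t \<alpha> \<delta> \<subseteq> bohr t \<alpha> \<epsilon>"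
  by (auto simp: bohr_def)

lemma bohr_kernel_nonneg: "0 \<le> bohr_kernel t \<alpha> m n"
  by (simp add: bohr_kernel_def raised_cos_nonneg prod_nonneg)

lemma bohr_kernel_ge_on_bohr:
  assumes "n \<in> bohr t \<alpha> \<delta>" "\<delta> \<le> 1/2"
  shows "raised_cos \<delta> ^ (m * t) \<le> bohr_kernel t \<alpha> m n"
proof -
  have "raised_cos \<delta> ^ (m * t) = (\<Prod>i<t. raised_cos \<delta> ^ m)"
    by (simp add: power_mult)
  also have "\<dots> \<le> bohr_kernel t \<alpha> m n"
    unfolding bohr_kernel_def using assms
    by (intro prod_mono conjI power_mono raised_cos_ge_if_normT_le)
       (auto simp: bohr_def raised_cos_nonneg)
  finally show ?thesis .
qed

lemma bohr_kernel_le_off_bohr: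
  assumes "1 \<le> n" "n \<notin> bohr t \<alpha> \<epsilon>" "0 \<le> e" "e \<le> \<epsilon>" "e \<le> 1/2"
  shows "bohr_kernel t \<alpha> m n \<le> raised_cos e ^ m"
proof -
  obtain j where "j < t" "\<epsilon> < normT (real n * \<alpha> j)"
    using assms(1,2) by (auto simp: bohr_def not_le)
  have "bohr_kernel t \<alpha> m n = raised_cos (real n * \<alpha> j) ^ m * (\<Prod>i\<in>{..<t} - {j}. raised_cos (real n * \<alpha> i) ^ m)"
    unfolding bohr_kernel_def using \<open>j < t\<close> by (intro prod.remove) auto
  also have "\<dots> \<le> raised_cos (real n * \<alpha> j) ^ m"
    by (intro mult_left_le prod_le_1 conjI) (auto simp: raised_cos_nonneg raised_cos_le_1 power_le_one)
  also have "\<dots> \<le> raised_cos e ^ m"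
    using \<open>\<epsilon> < normT (real n * \<alpha> j)\<close> assms(3-5)
    by (intro power_mono raised_cos_le_if_normT_ge) (auto simp: raised_cos_nonneg)
  finally show ?thesis .
qed

lemma bohr_kernel_cos_ge:
  assumes \<beta>: "normS_le \<beta> (bohr t \<alpha> \<epsilon>) (1/6)"
    and "0 \<le> \<delta>" "\<delta> \<le> e" "e \<le> \<epsilon>" "e \<le> 1/2"
  shows "(if n \<in> bohr t \<alpha> \<delta> then raised_cos \<delta> ^ (m * t) / 2 else 0) - raised_cos e ^ m
         \<le> bohr_kernel t \<alpha> m n * cos (2*pi*(real n * \<beta>))"
proof (cases "n \<in> bohr t \<alpha> \<epsilon>")
  case True
  then have "1/2 \<le> cos (2*pi*(real n * \<beta>))"
    using \<beta> normT_le_sixth_iff unfolding normS_le_def by blast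
  from mult_left_mono[OF this bohr_kernel_nonneg]
  have "bohr_kernel t \<alpha> m n / 2 \<le> bohr_kernel t \<alpha> m n * cos (2*pi*(real n * \<beta>))"
    by simp
  moreover have "(if n \<in> bohr t \<alpha> \<delta> then raised_cos \<delta> ^ (m * t) / 2 else 0) \<le> bohr_kernel t \<alpha> m n / 2"
  proof (cases "n \<in> bohr t \<alpha> \<delta>")
    case True
    with assms show ?thesis
      using bohr_kernel_ge_on_bohr[of n t \<alpha> \<delta> m] by simp
  qed (simp add: bohr_kernel_nonneg)
  moreover have "0 \<le> raised_cos e ^ m"
    by (simp add: raised_cos_nonneg)
  ultimately show ?thesis
    by linarith
next
  case False
  then have "n \<notin> bohr t \<alpha> \<delta>"
    using bohr_mono[of \<delta> \<epsilon>] assms by auto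
  have "- (raised_cos e ^ m) \<le> bohr_kernel t \<alpha> m n * cos (2*pi*(real n * \<beta>))"
  proof (cases "n = 0")
    case True
    then show ?thesis
      using bohr_kernel_nonneg[of t \<alpha> m n] zero_le_power[OF raised_cos_nonneg, of e m] by simp
  next
    case False
    then have "bohr_kernel t \<alpha> m n \<le> raised_cos e ^ m"
      using \<open>n \<notin> bohr t \<alpha> \<epsilon>\<close> assms by (intro bohr_kernel_le_off_bohr) auto
    moreover have "- bohr_kernel t \<alpha> m n \<le> bohr_kernel t \<alpha> m n * cos (2*pi*(real n * \<beta>))"
      using mult_left_mono[OF cos_ge_minus_one bohr_kernel_nonneg] by simp
    ultimately show ?thesis by linarith
  qed
  with \<open>n \<notin> bohr t \<alpha> \<delta>\<close> show ?thesis by simp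
qed

lemma bohr_kernel_correlation_ge:
  assumes "normS_le \<beta> (bohr t \<alpha> \<epsilon>) (1/6)" "0 \<le> \<delta>" "\<delta> \<le> e" "e \<le> \<epsilon>" "e \<le> 1/2"
  shows "real (card {n \<in> bohr t \<alpha> \<delta>. n < N}) * (raised_cos \<delta> ^ (m * t) / 2) - real N * raised_cos e ^ m
         \<le> (\<Sum>n<N. bohr_kernel t \<alpha> m n * cos (2*pi*(real n * \<beta>)))"
proof -
  have "(\<Sum>n<N. if n \<in> bohr t \<alpha> \<delta> then raised_cos \<delta> ^ (m * t) / 2 else 0)
        = (\<Sum>n\<in>{..<N} \<inter> bohr t \<alpha> \<delta>. raised_cos \<delta> ^ (m * t) / 2)"
    by (rule sum.inter_restrict[symmetric]) simp
  also have "{..<N} \<inter> bohr t \<alpha> \<delta> = {n \<in> bohr t \<alpha> \<delta>. n < N}"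
    by auto
  finally have "real (card {n \<in> bohr t \<alpha> \<delta>. n < N}) * (raised_cos \<delta> ^ (m * t) / 2) - real N * raised_cos e ^ m
      = (\<Sum>n<N. (if n \<in> bohr t \<alpha> \<delta> then raised_cos \<delta> ^ (m * t) / 2 else 0) - raised_cos e ^ m)"
    by (simp add: sum_subtractf)
  also have "\<dots> \<le> (\<Sum>n<N. bohr_kernel t \<alpha> m n * cos (2*pi*(real n * \<beta>)))"
    by (intro sum_mono bohr_kernel_cos_ge[OF assms])
  finally show ?thesis .
qed

lemma exists_bohr_parameters:
  assumes "0 < e" "e \<le> 1/2"
  shows "\<exists>K m. 1 \<le> K \<and> 1 / real K \<le> e \<and>
           2 * real K ^ t * raised_cos e ^ m < raised_cos (1 / real K) ^ (m * t)"
proof -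
  define q where "q = raised_cos e"
  have "cos (2*pi*e) < cos 0"
    using assms by (subst cos_mono_less_eq) auto
  then have "q < 1"
    by (simp add: q_def raised_cos_def)
  have "(\<lambda>K. raised_cos (1 / real K) ^ t) \<longlonglongrightarrow> raised_cos 0 ^ t"
    unfolding raised_cos_def by (intro tendsto_intros lim_inverse_n') simp
  then have "eventually (\<lambda>K. q < raised_cos (1 / real K) ^ t) sequentially"
    using \<open>q < 1\<close> by (intro order_tendstoD(1)) (auto simp: raised_cos_def)
  moreover have "eventually (\<lambda>K. 1 / real K < e) sequentially"
    using lim_inverse_n' assms(1) by (intro order_tendstoD(2)) auto
  ultimately have "eventually (\<lambda>K. 1 \<le> K \<and> q < raised_cos (1 / real K) ^ t \<and> 1 / real K < e) sequentially"
    using eventually_ge_at_top[of 1] by eventually_elim auto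
  then obtain K :: nat where K: "1 \<le> K" "q < raised_cos (1 / real K) ^ t" "1 / real K < e"
    using eventually_happens'[OF sequentially_bot] by blast
  define p where "p = raised_cos (1 / real K) ^ t"
  have "0 \<le> q" "q < p"
    using K by (simp_all add: q_def p_def raised_cos_nonneg)
  then have "(\<lambda>m. (q / p) ^ m) \<longlonglongrightarrow> 0"
    by (intro LIMSEQ_power_zero) simp
  moreover have "0 < 1 / (2 * real K ^ t)"
    using K by simp
  ultimately have "eventually (\<lambda>m. (q / p) ^ m < 1 / (2 * real K ^ t)) sequentially"
    by (rule order_tendstoD(2))
  then obtain m where "(q / p) ^ m < 1 / (2 * real K ^ t)"
    using eventually_happens'[OF sequentially_bot] by blast
  then have "2 * real K ^ t * q ^ m < p ^ m"
    using \<open>0 \<le> q\<close> \<open>q < p\<close> K by (simp add: power_divide field_simps)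
  moreover have "p ^ m = raised_cos (1 / real K) ^ (m * t)"
    by (simp add: p_def power_mult[symmetric] mult.commute)
  ultimately show ?thesis
    using K unfolding q_def by (intro exI[of _ K] exI[of _ m]) auto
qed

lemma bohr_kernel_correlation_linear_growth:
  fixes K m :: nat
  assumes "normS_le \<beta> (bohr t \<alpha> \<epsilon>) (1/6)" "1 \<le> K" "1 / real K \<le> e" "e \<le> \<epsilon>" "e \<le> 1/2"
  defines "P \<equiv> raised_cos (1 / real K) ^ (m * t)"
  shows "real N * (P / (2 * real K ^ t) - raised_cos e ^ m) - P / 2
         \<le> (\<Sum>n<N. bohr_kernel t \<alpha> m n * cos (2*pi*(real n * \<beta>)))"
proof -
  have "real N * (P / (2 * real K ^ t) - raised_cos e ^ m) - P / 2
        = (real N / real K ^ t - 1) * (P / 2) - real N * raised_cos e ^ m"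
    using assms(2) by (simp add: field_simps)
  also have "\<dots> \<le> real (card {n \<in> bohr t \<alpha> (1 / real K). n < N}) * (P / 2) - real N * raised_cos e ^ m"
    using card_bohr_lessThan_ge[OF assms(2)]
    by (intro diff_right_mono mult_right_mono) (auto simp: P_def raised_cos_nonneg)
  also have "\<dots> \<le> (\<Sum>n<N. bohr_kernel t \<alpha> m n * cos (2*pi*(real n * \<beta>)))"
    unfolding P_def using assms by (intro bohr_kernel_correlation_ge) auto
  finally show ?thesis .
qed

lemma bohr_dual_subset_genM:
  assumes "0 < \<epsilon>"
  shows "\<exists>M>0. \<forall>\<beta>. normS_le \<beta> (bohr t \<alpha> \<epsilon>) (1/6) \<longrightarrow> \<beta> \<in> genM t \<alpha> M"
proof -
  define e where "e = min \<epsilon> (1/2)"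
  have e: "0 < e" "e \<le> \<epsilon>" "e \<le> 1/2"
    using assms by (auto simp: e_def)
  then obtain K m where K: "1 \<le> K" "1 / real K \<le> e"
    and growth: "2 * real K ^ t * raised_cos e ^ m < raised_cos (1 / real K) ^ (m * t)"
    using exists_bohr_parameters by blast
  define P where "P = raised_cos (1 / real K) ^ (m * t)"
  define a where "a = P / (2 * real K ^ t) - raised_cos e ^ m"
  have "1 \<le> real K ^ t"
    using K by simp
  then have "0 < real K ^ t"
    by linarith
  with growth have "0 < a"
    by (simp add: a_def P_def field_simps)
  have "0 < m"
    using growth \<open>1 \<le> real K ^ t\<close> by (cases m) auto
  moreover have "\<beta> \<in> genM t \<alpha> m" if \<beta>: "normS_le \<beta> (bohr t \<alpha> \<epsilon>) (1/6)" for \<beta>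
  proof (rule ccontr)
    assume "\<beta> \<notin> genM t \<alpha> m"
    then obtain C where C: "\<And>N. (\<Sum>n<N. bohr_kernel t \<alpha> m n * cos (2*pi*(real n * \<beta>))) \<le> C"
      using bohr_kernel_correlation_bounded by blast
    obtain N :: nat where "(C + P / 2) / a < real N"
      using reals_Archimedean2 by blast
    then have "C < real N * a - P / 2"
      using \<open>0 < a\<close> by (simp add: field_simps)
    moreover have "real N * a - P / 2 \<le> (\<Sum>n<N. bohr_kernel t \<alpha> m n * cos (2*pi*(real n * \<beta>)))"
      unfolding a_def P_def using \<beta> K e by (intro bohr_kernel_correlation_linear_growth) auto
    ultimately show False
      using C[of N] by linarith
  qed
  ultimately show ?thesis by blast
qed

lemma normS_le_add_int: "normS_le (\<beta> + of_int k) S c \<longleftrightarrow> normS_le \<beta> S c"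
proof -
  have "normT (real n * (\<beta> + of_int k)) = normT (real n * \<beta>)" for n
  proof -
    have "real n * (\<beta> + of_int k) = real n * \<beta> + of_int (int n * k)"
      by (simp add: algebra_simps)
    then show ?thesis
      by (simp only: normT_add_int)
  qed
  then show ?thesis
    by (simp add: normS_le_def)
qed

lemma openT_add_int_iff:
  assumes "openT V"
  shows "x + of_int k \<in> V \<longleftrightarrow> x \<in> V"
proof (induction k rule: int_induct[of _ 0])
  case (step1 i)
  then show ?case
    using assms[unfolded openT_def] by (metis add.assoc of_int_1 of_int_add)
next
  case (step2 i)
  then show ?case
    using assms[unfolded openT_def] by (metis diff_add_cancel add.assoc of_int_1 of_int_add)
qed simp

lemma normS_le_limit:
  assumes "0 \<le> c" "c \<le> 1/2" "b \<longlonglongrightarrow> l"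
    and "\<forall>n\<in>S. eventually (\<lambda>j. normT (real n * b j) \<le> c) sequentially"
  shows "normS_le l S c"
  unfolding normS_le_def
proof
  fix n assume "n \<in> S"
  have "(\<lambda>j. cos (2*pi*(real n * b j))) \<longlonglongrightarrow> cos (2*pi*(real n * l))"
    by (intro tendsto_intros assms(3))
  moreover have "eventually (\<lambda>j. cos (2*pi*c) \<le> cos (2*pi*(real n * b j))) sequentially"
    using assms(4) \<open>n \<in> S\<close> normT_le_iff_cos_ge[OF assms(1,2)] by simp
  ultimately have "cos (2*pi*c) \<le> cos (2*pi*(real n * l))"
    by (rule tendsto_lowerbound) simp
  then show "normT (real n * l) \<le> c"
    using normT_le_iff_cos_ge[OF assms(1,2)] by simp
qed

lemma bohrN_dual_subset:
  assumes dual: "\<forall>\<beta>. normS_le \<beta> (bohr t \<alpha> \<epsilon>) (1/6) \<longrightarrow> \<beta> \<in> genM t \<alpha> M"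
    and "openT V" "genM t \<alpha> M \<subseteq> V"
  shows "\<exists>N>0. \<forall>\<beta>. normS_le \<beta> (bohrN t \<alpha> N \<epsilon>) (1/6) \<longrightarrow> \<beta> \<in> V"
proof (rule ccontr)
  assume "\<not> ?thesis"
  then have "\<forall>N. \<exists>\<beta>. normS_le \<beta> (bohrN t \<alpha> (Suc N) \<epsilon>) (1/6) \<and> \<beta> \<notin> V"
    by (metis zero_less_Suc)
  then obtain b where b: "\<And>N. normS_le (b N) (bohrN t \<alpha> (Suc N) \<epsilon>) (1/6)" "\<And>N. b N \<notin> V"
    by metis
  define b' where "b' N = frac (b N)" for N
  have shift: "b' N = b N + of_int (- \<lfloor>b N\<rfloor>)" for N
    by (simp add: b'_def frac_def)
  have b': "normS_le (b' N) (bohrN t \<alpha> (Suc N) \<epsilon>) (1/6)" "b' N \<notin> V" "b' N \<in> {0..1}" for N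
    using b[of N] frac_lt_1[of "b N"]
    unfolding shift normS_le_add_int openT_add_int_iff[OF \<open>openT V\<close>]
    by (auto simp: frac_def[symmetric] frac_ge_0 less_imp_le)
  obtain l r where "l \<in> {0..1}" "strict_mono r" and lim: "(b' \<circ> r) \<longlonglongrightarrow> l"
    using compact_imp_seq_compact[OF compact_Icc, of 0 1] b'(3) unfolding seq_compact_def by metis
  have "eventually (\<lambda>j. normT (real n * (b' \<circ> r) j) \<le> 1/6) sequentially" if "n \<in> bohr t \<alpha> \<epsilon>" for n
    unfolding eventually_sequentially
  proof (intro exI allI impI)
    fix j assume "n \<le> j"
    then have "n \<in> bohrN t \<alpha> (Suc (r j)) \<epsilon>"
      using that seq_suble[OF \<open>strict_mono r\<close>, of j] by (simp add: bohrN_def)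
    then show "normT (real n * (b' \<circ> r) j) \<le> 1/6"
      using b'(1)[of "r j"] by (simp add: normS_le_def)
  qed
  then have "normS_le l (bohr t \<alpha> \<epsilon>) (1/6)"
    by (intro normS_le_limit[OF _ _ lim] ballI) auto
  with dual assms(3) have "l \<in> V"
    by blast
  moreover have "open V"
    using \<open>openT V\<close> by (simp add: openT_def)
  ultimately have "eventually (\<lambda>j. (b' \<circ> r) j \<in> V) sequentially"
    using lim topological_tendstoD by blast
  then show False
    using b'(2) eventually_happens'[OF sequentially_bot] by auto
qed

theorem lemma4:
  fixes t :: nat and \<alpha> :: "nat \<Rightarrow> real" and \<epsilon> :: real
  assumes "\<epsilon> > 0"
  shows "(\<exists>M::nat. M > 0 \<and> (\<forall>\<beta>. normS_le \<beta> (bohr t \<alpha> \<epsilon>) (1/6) \<longrightarrow> \<beta> \<in> genM t \<alpha> M))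
       \<and> (\<forall>M::nat. M > 0 \<and> (\<forall>\<beta>. normS_le \<beta> (bohr t \<alpha> \<epsilon>) (1/6) \<longrightarrow> \<beta> \<in> genM t \<alpha> M) \<longrightarrow>
            (\<forall>V. openT V \<and> genM t \<alpha> M \<subseteq> V \<longrightarrow>
               (\<exists>N::nat. N > 0 \<and> (\<forall>\<beta>. normS_le \<beta> (bohrN t \<alpha> N \<epsilon>) (1/6) \<longrightarrow> \<beta> \<in> V))))"
proof (intro conjI allI impI)
  show "\<exists>M>0. \<forall>\<beta>. normS_le \<beta> (bohr t \<alpha> \<epsilon>) (1/6) \<longrightarrow> \<beta> \<in> genM t \<alpha> M"
    using assms by (rule bohr_dual_subset_genM)
next
  fix M V
  assume "0 < M \<and> (\<forall>\<beta>. normS_le \<beta> (bohr t \<alpha> \<epsilon>) (1/6) \<longrightarrow> \<beta> \<in> genM t \<alpha> M)"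
    and "openT V \<and> genM t \<alpha> M \<subseteq> V"
  then show "\<exists>N>0. \<forall>\<beta>. normS_le \<beta> (bohrN t \<alpha> N \<epsilon>) (1/6) \<longrightarrow> \<beta> \<in> V"
    using bohrN_dual_subset by blast
qed

end
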